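(* Let $\Gamma$ be a Neumaier graph with parameters $(n,k,\lambda;a,c)$. If $c=k$, then $\Gamma$ is the cycle graph $C_4$.
   Context: All graphs are finite, simple, undirected and connected. A graph is edge-regular with parameters $(n,k,\lambda)$ if it has $n$ vertices, is $k$-regular, and any two adjacent vertices have exactly $\lambda$ common neighbours. A clique $C$ is a regular clique with nexus $a$ if every vertex not in $C$ has exactly $a$ neighbours in $C$. A Neumaier graph is a non-complete edge-regular graph containing a regular clique; it has parameters $(n,k,\lambda;a,c)$ if it is edge-regular with parameters $(n,k,\lambda)$ and contains a regular clique of size $c$ with nexus $a$. *)

theory Defs
  imports Main
begin

definition simple_graph :: "'a set \<Rightarrow> ('a \<Rightarrow> 'a \<Rightarrow> bool) \<Rightarrow> bool" where
  "simple_graph V E \<longleftrightarrow> finite V \<and> V \<noteq> {} \<and>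
     (\<forall>x y. E x y \<longrightarrow> x \<in> V \<and> y \<in> V) \<and>
     (\<forall>x y. E x y \<longrightarrow> E y x) \<and> (\<forall>x. \<not> E x x)"

definition connected_graph :: "'a set \<Rightarrow> ('a \<Rightarrow> 'a \<Rightarrow> bool) \<Rightarrow> bool" where
  "connected_graph V E \<longleftrightarrow> simple_graph V E \<and> (\<forall>x\<in>V. \<forall>y\<in>V. E\<^sup>*\<^sup>* x y)"

definition complete_graph :: "'a set \<Rightarrow> ('a \<Rightarrow> 'a \<Rightarrow> bool) \<Rightarrow> bool" where
  "complete_graph V E \<longleftrightarrow> (\<forall>x\<in>V. \<forall>y\<in>V. x \<noteq> y \<longrightarrow> E x y)"

definition edge_regular :: "'a set \<Rightarrow> ('a \<Rightarrow> 'a \<Rightarrow> bool) \<Rightarrow> nat \<Rightarrow> nat \<Rightarrow> nat \<Rightarrow> bool" where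
  "edge_regular V E n k lam \<longleftrightarrow> connected_graph V E \<and> card V = n \<and>
     (\<forall>v\<in>V. card {u\<in>V. E v u} = k) \<and>
     (\<forall>x y. E x y \<longrightarrow> card {w\<in>V. E x w \<and> E y w} = lam)"

definition is_clique :: "'a set \<Rightarrow> ('a \<Rightarrow> 'a \<Rightarrow> bool) \<Rightarrow> 'a set \<Rightarrow> bool" where
  "is_clique V E C \<longleftrightarrow> C \<noteq> {} \<and> C \<subseteq> V \<and> (\<forall>x\<in>C. \<forall>y\<in>C. x \<noteq> y \<longrightarrow> E x y)"

definition regular_clique :: "'a set \<Rightarrow> ('a \<Rightarrow> 'a \<Rightarrow> bool) \<Rightarrow> 'a set \<Rightarrow> nat \<Rightarrow> bool" where
  "regular_clique V E C a \<longleftrightarrow> is_clique V E C \<and> (\<forall>v\<in>V - C. card {u\<in>C. E v u} = a)"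

definition neumaier_graph :: "'a set \<Rightarrow> ('a \<Rightarrow> 'a \<Rightarrow> bool) \<Rightarrow> nat \<Rightarrow> nat \<Rightarrow> nat \<Rightarrow> nat \<Rightarrow> nat \<Rightarrow> bool" where
  "neumaier_graph V E n k lam a c \<longleftrightarrow> edge_regular V E n k lam \<and> \<not> complete_graph V E \<and>
     (\<exists>C. regular_clique V E C a \<and> card C = c)"

definition cycle_adj :: "nat \<Rightarrow> nat \<Rightarrow> nat \<Rightarrow> bool" where
  "cycle_adj m i j \<longleftrightarrow> i < m \<and> j < m \<and> (j = (i + 1) mod m \<or> i = (j + 1) mod m)"

definition iso_cycle :: "'a set \<Rightarrow> ('a \<Rightarrow> 'a \<Rightarrow> bool) \<Rightarrow> nat \<Rightarrow> bool" where
  "iso_cycle V E m \<longleftrightarrow> (\<exists>f. bij_betw f V {..<m} \<and> (\<forall>x\<in>V. \<forall>y\<in>V. E x y \<longleftrightarrow> cycle_adj m (f x) (f y)))"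

end

theory Submission
  imports Defs
begin

text \<open>Let \<open>C\<close> be a regular clique of size \<open>k\<close>. Since the graph is connected and not complete, some
  \<open>x \<in> C\<close> has a neighbour \<open>v \<notin> C\<close>, and counting degrees gives \<open>N(x) = (C - {x}) \<union> {v}\<close>. Counting
  common neighbours of \<open>x\<close> and any other \<open>z \<in> C\<close> gives \<open>\<lambda> = k - 1\<close> or \<open>\<lambda> = k - 2\<close> according as
  \<open>v\<close> is adjacent to \<open>z\<close> or not, so \<open>v\<close> is adjacent to all of \<open>C\<close> or to \<open>x\<close> only. In the first case
  \<open>C \<union> {v}\<close> is closed under taking neighbours, hence is the whole (complete) graph. In the second
  case \<open>x\<close> and \<open>v\<close> have no common neighbour, so \<open>\<lambda> = 0\<close>, \<open>k = 2\<close> and the nexus is \<open>1\<close>; a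
  2-regular graph in which every vertex outside an edge is adjacent to exactly one of its ends
  is the 4-cycle.\<close>

lemma iso_cycle_4I:
  assumes V: "V = {p0, p1, p2, p3}" and "distinct [p0, p1, p2, p3]"
    and sym: "\<And>p q. E p q \<Longrightarrow> E q p" and irrefl: "\<And>p. \<not> E p p"
    and "E p0 p1" "E p1 p2" "E p2 p3" "E p3 p0" "\<not> E p0 p2" "\<not> E p1 p3"
  shows "iso_cycle V E 4"
proof -
  define f where "f p = (if p = p0 then 0 else if p = p1 then 1 else if p = p2 then 2 else 3::nat)"
    for p
  have f: "f p0 = 0" "f p1 = 1" "f p2 = 2" "f p3 = 3"
    using assms(2) by (auto simp: f_def)
  have "bij_betw f V {..<4}"
    unfolding bij_betw_def inj_on_def V using f assms(2) by (auto simp: lessThan_nat_numeral)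
  moreover have "\<forall>p\<in>V. \<forall>q\<in>V. E p q \<longleftrightarrow> cycle_adj 4 (f p) (f q)"
    unfolding V using f assms sym irrefl by (auto simp: cycle_adj_def)
  ultimately show ?thesis
    unfolding iso_cycle_def by blast
qed

locale edge_regular_graph =
  fixes V :: "'a set" and E :: "'a \<Rightarrow> 'a \<Rightarrow> bool" and n k lam :: nat
  assumes edge_regular: "edge_regular V E n k lam"
begin

abbreviation neighbourhood :: "'a \<Rightarrow> 'a set" where
  "neighbourhood x \<equiv> {u\<in>V. E x u}"

lemma finite_V: "finite V"
  and adj_in_V: "E x y \<Longrightarrow> x \<in> V \<and> y \<in> V"
  and adj_sym: "E x y \<Longrightarrow> E y x"
  and adj_irrefl: "\<not> E x x"
  and connected: "x \<in> V \<Longrightarrow> y \<in> V \<Longrightarrow> E\<^sup>*\<^sup>* x y"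
  and card_neighbourhood: "x \<in> V \<Longrightarrow> card (neighbourhood x) = k"
  and card_common_neighbours: "E x y \<Longrightarrow> card {w\<in>V. E x w \<and> E y w} = lam"
  using edge_regular
  unfolding edge_regular_def connected_graph_def simple_graph_def by blast+

lemma closed_set_contains_V:
  assumes "x \<in> S" "x \<in> V" and closed: "\<And>p q. p \<in> S \<Longrightarrow> E p q \<Longrightarrow> q \<in> S"
  shows "V \<subseteq> S"
proof
  fix y assume "y \<in> V"
  with \<open>x \<in> V\<close> have "E\<^sup>*\<^sup>* x y" by (rule connected)
  then show "y \<in> S"
    by (induction rule: rtranclp_induct) (use \<open>x \<in> S\<close> closed in blast)+
qed

end

locale edge_regular_graph_with_degree_clique = edge_regular_graph +
  fixes C :: "'a set"
  assumes clique: "is_clique V E C" and card_C: "card C = k"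
begin

lemma C_subset_V: "C \<subseteq> V"
  and C_nonempty: "C \<noteq> {}"
  and clique_adj: "x \<in> C \<Longrightarrow> y \<in> C \<Longrightarrow> x \<noteq> y \<Longrightarrow> E x y"
  using clique unfolding is_clique_def by blast+

lemma finite_C: "finite C"
  using C_subset_V finite_V by (rule finite_subset)

lemma exists_edge_leaving_clique:
  assumes "\<not> complete_graph V E"
  obtains x v where "x \<in> C" "v \<notin> C" "E x v"
proof (rule ccontr)
  assume "\<not> thesis"
  with that have closed: "\<And>p q. p \<in> C \<Longrightarrow> E p q \<Longrightarrow> q \<in> C" by blast
  obtain x where "x \<in> C" using C_nonempty by blast
  then have "V \<subseteq> C"
    using C_subset_V closed by (intro closed_set_contains_V) auto
  then have "complete_graph V E"
    using clique_adj unfolding complete_graph_def by blast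
  with assms show False by contradiction
qed

text \<open>A vertex of \<open>C\<close> already has \<open>k - 1\<close> neighbours in \<open>C\<close>, so an outside neighbour is its only one.\<close>
lemma neighbourhood_of_clique_vertex:
  assumes "x \<in> C" "v \<notin> C" "E x v"
  shows "neighbourhood x = insert v (C - {x})"
proof -
  have sub: "insert v (C - {x}) \<subseteq> neighbourhood x"
    using assms clique_adj C_subset_V adj_in_V by auto
  have "card (insert v (C - {x})) = k"
    using assms finite_C card_C card_Suc_Diff1[OF finite_C \<open>x \<in> C\<close>] by simp
  moreover have "card (neighbourhood x) = k"
    using assms C_subset_V card_neighbourhood by auto
  ultimately show ?thesis
    using card_subset_eq[OF _ sub] finite_V by simp
qed

lemma lam_by_adjacency_to_outside_neighbour:
  assumes "x \<in> C" "v \<notin> C" "E x v" "z \<in> C" "z \<noteq> x"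
  shows "lam = (if E v z then k - 1 else k - 2)"
proof -
  have Nx: "E x w \<longleftrightarrow> w = v \<or> w \<in> C - {x}" if "w \<in> V" for w
    using neighbourhood_of_clique_vertex[OF assms(1-3)] that by blast
  have "E z v \<longleftrightarrow> E v z" using adj_sym by blast
  then have common: "{w\<in>V. E x w \<and> E z w} = (C - {x, z}) \<union> (if E v z then {v} else {})"
    using Nx assms clique_adj C_subset_V adj_in_V adj_irrefl by auto
  have "card (C - {x, z}) = k - 2"
    using assms finite_C card_C by (simp add: card_Diff_subset)
  then have "card {w\<in>V. E x w \<and> E z w} = (if E v z then k - 1 else k - 2)"
    unfolding common using assms finite_C card_C card_mono[OF finite_C, of "{x, z}"]
    by auto
  then show ?thesis
    using card_common_neighbours clique_adj assms by metis
qed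

lemma complete_if_adjacent_to_whole_clique:
  assumes v: "v \<in> V - C" and dominating: "\<forall>z\<in>C. E v z"
  shows "complete_graph V E"
proof -
  have "C \<subseteq> neighbourhood v"
    using dominating C_subset_V by auto
  moreover have "card (neighbourhood v) = card C"
    using card_neighbourhood v card_C by simp
  ultimately have Nv: "neighbourhood v = C"
    using card_subset_eq[of "neighbourhood v" C] finite_V by simp
  have closed: "q \<in> insert v C" if "p \<in> insert v C" "E p q" for p q
  proof (cases "p = v")
    case True
    then show ?thesis using Nv that adj_in_V by blast
  next
    case False
    then have "p \<in> C" using that by blast
    moreover have "E p v" using dominating \<open>p \<in> C\<close> adj_sym by blast
    ultimately have "neighbourhood p = insert v (C - {p})"
      using neighbourhood_of_clique_vertex v by blast
    then show ?thesis using that adj_in_V by blast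
  qed
  have "V \<subseteq> insert v C"
    using v closed by (intro closed_set_contains_V) auto
  moreover have "E p q" if "p \<in> insert v C" "q \<in> insert v C" "p \<noteq> q" for p q
    using that clique_adj dominating adj_sym by blast
  ultimately show ?thesis
    unfolding complete_graph_def by blast
qed

lemma not_adjacent_to_whole_clique:
  assumes "x \<in> C" "v \<notin> C" "E x v" "y \<in> C" "\<not> E v y"
  shows "k = 2" and "{u\<in>C. E v u} = {x}"
proof -
  have "y \<noteq> x" using assms adj_sym by blast
  then have "card {x, y} \<le> k"
    using assms card_C card_mono[OF finite_C, of "{x, y}"] by simp
  then have "k \<ge> 2" using \<open>y \<noteq> x\<close> by simp
  have lam: "lam = k - 2"
    using lam_by_adjacency_to_outside_neighbour[OF assms(1-4) \<open>y \<noteq> x\<close>] assms(5) by simp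
  have "\<not> E v z" if "z \<in> C" "z \<noteq> x" for z
  proof
    assume "E v z"
    then have "lam = k - 1"
      using lam_by_adjacency_to_outside_neighbour[OF assms(1-3) that] by simp
    with lam \<open>k \<ge> 2\<close> show False by simp
  qed
  moreover have "E v x" using assms(3) adj_sym by blast
  ultimately show only_x: "{u\<in>C. E v u} = {x}"
    using assms(1) by blast
  have "{w\<in>V. E x w \<and> E v w} = {}"
  proof -
    have "\<not> E v w" if "w \<in> insert v (C - {x})" for w
      using that only_x adj_irrefl by blast
    then show ?thesis
      using neighbourhood_of_clique_vertex[OF assms(1-3)] by blast
  qed
  then have "lam = 0"
    using card_common_neighbours[OF assms(3)] by (metis card.empty)
  with lam \<open>k \<ge> 2\<close> show "k = 2" by simp
qed

lemma iso_cycle_4_if_edge_clique_with_nexus_1: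
  assumes "k = 2" and nexus: "regular_clique V E C 1"
  shows "iso_cycle V E 4"
proof -
  obtain x y where C: "C = {x, y}" and "x \<noteq> y"
    using card_C \<open>k = 2\<close> card_2_iff by metis
  have has_outside_neighbour: "\<exists>u. u \<notin> C \<and> E p u" if "p \<in> C" for p
  proof (rule ccontr)
    assume "\<not> ?thesis"
    then have "neighbourhood p \<subseteq> C - {p}" using adj_irrefl by blast
    moreover have "card (C - {p}) = 1" using that card_C \<open>k = 2\<close> finite_C by simp
    ultimately have "card (neighbourhood p) \<le> 1"
      using card_mono[OF finite_Diff[OF finite_C]] by metis
    then show False
      using card_neighbourhood C_subset_V that \<open>k = 2\<close> by fastforce
  qed
  obtain v where v: "v \<notin> C" "E x v" using has_outside_neighbour C by blast
  obtain w where w: "w \<notin> C" "E y w" using has_outside_neighbour C by blast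
  have "v \<in> V" "w \<in> V" using v w adj_in_V by blast+
  have adj_exactly_one_end: "E p x \<longleftrightarrow> \<not> E p y" if p: "p \<in> V - C" for p
  proof -
    obtain u where u: "{u'\<in>C. E p u'} = {u}"
      using nexus p unfolding regular_clique_def by (auto simp: card_1_singleton_iff)
    have "E p x \<longleftrightarrow> x = u" "E p y \<longleftrightarrow> y = u" "u = x \<or> u = y"
      using u C by blast+
    then show ?thesis using \<open>x \<noteq> y\<close> by blast
  qed
  have "\<not> E v y" using adj_exactly_one_end[of v] adj_sym v \<open>v \<in> V\<close> by blast
  have "\<not> E w x" using adj_exactly_one_end[of w] adj_sym w \<open>w \<in> V\<close> by blast
  have Nx: "neighbourhood x = {y, v}" and Ny: "neighbourhood y = {x, w}"
    using neighbourhood_of_clique_vertex v w C \<open>x \<noteq> y\<close> by auto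
  have V: "V = {x, y, v, w}"
  proof
    show "V \<subseteq> {x, y, v, w}"
    proof
      fix z assume "z \<in> V"
      show "z \<in> {x, y, v, w}"
      proof (cases "z \<in> C")
        case False
        then have "E x z \<or> E y z"
          using adj_exactly_one_end[of z] \<open>z \<in> V\<close> adj_sym by blast
        then show ?thesis using Nx Ny \<open>z \<in> V\<close> by blast
      qed (use C in blast)
    qed
    show "{x, y, v, w} \<subseteq> V" using C C_subset_V \<open>v \<in> V\<close> \<open>w \<in> V\<close> by blast
  qed
  have "E v w"
  proof (rule ccontr)
    assume "\<not> E v w"
    then have "neighbourhood v \<subseteq> {x}"
      using V \<open>\<not> E v y\<close> adj_irrefl by blast
    then have "card (neighbourhood v) \<le> 1"
      using card_mono[of "{x}"] by fastforce
    then show False using card_neighbourhood \<open>v \<in> V\<close> \<open>k = 2\<close> by fastforce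
  qed
  have "E x y" using clique_adj C \<open>x \<noteq> y\<close> by blast
  have "distinct [x, y, w, v]"
    using C \<open>x \<noteq> y\<close> v w \<open>\<not> E v y\<close> adj_sym by auto
  then show ?thesis
    using iso_cycle_4I[of V x y w v E] V adj_sym adj_irrefl \<open>E x y\<close> w(2) \<open>E v w\<close> v(2)
      \<open>\<not> E w x\<close> \<open>\<not> E v y\<close> by blast
qed

end

theorem proposition3p10:
  fixes V :: "'a set" and E :: "'a \<Rightarrow> 'a \<Rightarrow> bool" and n k lam a c :: nat
  assumes "neumaier_graph V E n k lam a c"
    and "c = k"
  shows "iso_cycle V E 4"
proof -
  obtain C where not_complete: "\<not> complete_graph V E" and er: "edge_regular V E n k lam"
    and regular: "regular_clique V E C a" and "card C = k"
    using assms unfolding neumaier_graph_def by blast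
  interpret edge_regular_graph_with_degree_clique V E n k lam C
    using er regular \<open>card C = k\<close> by unfold_locales (auto simp: regular_clique_def)
  obtain x v where xv: "x \<in> C" "v \<notin> C" "E x v"
    using exists_edge_leaving_clique not_complete by blast
  then have "v \<in> V - C" using adj_in_V by blast
  then obtain y where "y \<in> C" "\<not> E v y"
    using complete_if_adjacent_to_whole_clique not_complete by blast
  note v_sees_only_x = not_adjacent_to_whole_clique[OF xv this]
  have "card {u\<in>C. E v u} = a"
    using regular \<open>v \<in> V - C\<close> unfolding regular_clique_def by blast
  then have "a = 1"
    using v_sees_only_x(2) by simp
  then show ?thesis
    using iso_cycle_4_if_edge_clique_with_nexus_1 v_sees_only_x(1) regular by blast
qed

end
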